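(* Let $\lambda>1$ and let $(a_n)_{n\ge1}$, $(b_n)_{n\ge1}$ be real sequences with $a\doteq\sup_{n\ge1}a_n<\infty$ and $b_n\ge0$ for all $n$. Assume $a\ge(\lambda-1)[1-\ln(\lambda-1)]$ and let $u^*$ be the smallest positive fixed point of $f(u)=u^{\lambda}e^{a-u}$. Let $\{x_n\}$ be a non-negative solution of $$x_{n+1}=x_{n-1}^{\lambda}e^{a_n-b_nx_n-x_{n-1}},\qquad n\ge1.$$ If $x_k\in(0,u^* )$ for some $k\ge0$, then the terms $x_k,x_{k+2},x_{k+4},\dots$ are strictly decreasing and converge to $0$.
   Context: When $\lambda>1$ and $a\ge(\lambda-1)[1-\ln(\lambda-1)]$, the map $f(u)=u^\lambda e^{a-u}$ on $[0,\infty)$ has at least one positive fixed point; $u^*$ denotes the smallest one (the Allee fixed point of $f$). *)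

theory Defs
  imports Complex_Main
begin

definition allee_map :: "real \<Rightarrow> real \<Rightarrow> real \<Rightarrow> real" where
  "allee_map lam a u = u powr lam * exp (a - u)"

definition is_allee_fixed_point :: "real \<Rightarrow> real \<Rightarrow> real \<Rightarrow> bool" where
  "is_allee_fixed_point lam a u \<longleftrightarrow>
     u > 0 \<and> allee_map lam a u = u \<and>
     (\<forall>v. 0 < v \<and> allee_map lam a v = v \<longrightarrow> u \<le> v)"

end

theory Submission
  imports Defs
begin

text \<open>Each of the subsequences (x (k + 2j))_j is dominated by the Allee map f, because
  a_n \<le> a and b_n x_n \<ge> 0. Below its smallest positive fixed point u* the map f lies strictly
  under the diagonal: it does so near 0 because lam > 1, and a crossing in (0, u*) would be a
  smaller fixed point. A positive sequence with y_(j+1) \<le> f(y_j) under such a map therefore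
  decreases strictly, and its limit L satisfies L \<le> f(L), which forces L = 0.\<close>

lemma isCont_allee_map: "u > 0 \<Longrightarrow> isCont (allee_map lam a) u"
  unfolding allee_map_def by (auto intro!: continuous_intros)

lemma allee_map_less_self_near_zero:
  assumes lam: "lam > 1" and u: "u > 0"
  obtains e where "0 < e" "e < u" "allee_map lam a e < e"
proof
  \<comment> \<open>f(e)/e = e^(lam-1) e^(a-e), which is below 1 as soon as e^(lam-1) < e^(-a).\<close>
  define e where "e = min (u/2) (exp (-a/(lam-1)) / 2)"
  show e0: "0 < e" "e < u" using u by (auto simp: e_def)
  have "e < exp (-a/(lam-1))" unfolding e_def using exp_gt_zero[of "-a/(lam-1)"] by linarith
  hence "e powr (lam-1) < exp (-a/(lam-1)) powr (lam-1)"
    using e0 lam by (intro powr_less_mono2) auto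
  also have "\<dots> = exp (-a)" using lam by (simp add: exp_powr_real)
  finally have "e powr (lam-1) * exp a < 1" by (simp add: exp_minus field_simps)
  moreover have "exp (-e) < 1" using e0 by simp
  ultimately have "e powr (lam-1) * exp a * exp (-e) < 1"
    by (smt (verit) exp_gt_zero mult_less_cancel_left1 powr_ge_zero zero_le_mult_iff)
  moreover have "allee_map lam a e = e powr (lam-1) * exp a * exp (-e) * e"
    unfolding allee_map_def using e0 powr_add[of e 1 "lam-1"]
    by (simp add: exp_diff exp_minus field_simps)
  ultimately show "allee_map lam a e < e" using e0 by simp
qed

lemma allee_map_less_self_below_fixed_point:
  assumes lam: "lam > 1" and ustar: "is_allee_fixed_point lam a ustar"
    and u: "0 < u" "u < ustar"
  shows "allee_map lam a u < u"
proof (rule ccontr)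
  assume "\<not> allee_map lam a u < u"
  hence "allee_map lam a u - u \<ge> 0" by simp
  moreover obtain e where e: "0 < e" "e < u" "allee_map lam a e - e < 0"
    using allee_map_less_self_near_zero[OF lam \<open>u > 0\<close>] by (metis diff_less_0_iff_less)
  moreover have "continuous_on {e..u} (\<lambda>v. allee_map lam a v - v)"
    using e by (intro continuous_at_imp_continuous_on ballI continuous_intros isCont_allee_map) auto
  ultimately obtain v where v: "e \<le> v" "v \<le> u" "allee_map lam a v - v = 0"
    using IVT'[of "\<lambda>v. allee_map lam a v - v" e 0 u] by auto
  hence "ustar \<le> v" using ustar e unfolding is_allee_fixed_point_def by auto
  thus False using v u by simp
qed

lemma dominated_orbit_decreases_to_zero:
  fixes y :: "nat \<Rightarrow> real" and f :: "real \<Rightarrow> real"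
  assumes below: "\<And>u. 0 < u \<Longrightarrow> u < c \<Longrightarrow> f u < u"
    and cont: "\<And>u. 0 < u \<Longrightarrow> isCont f u"
    and pos: "\<And>j. 0 < y j"
    and dom: "\<And>j. y (Suc j) \<le> f (y j)"
    and start: "y 0 < c"
  shows "(\<forall>j. y (Suc j) < y j) \<and> y \<longlonglongrightarrow> 0"
proof -
  have dec: "y (Suc j) < y j \<and> y j < c" for j
  proof (induction j)
    case 0
    then show ?case using start dom[of 0] below[OF pos start] by simp
  next
    case (Suc j)
    then have "y (Suc j) < c" by simp
    then show ?case using dom[of "Suc j"] below[OF pos] by (meson order.strict_trans1)
  qed
  have "decseq y" by (rule decseq_SucI) (use dec in \<open>simp add: less_imp_le\<close>)
  moreover have "\<forall>j. 0 \<le> y j" using pos by (simp add: less_imp_le)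
  ultimately obtain L where L: "y \<longlonglongrightarrow> L" "\<forall>j. L \<le> y j"
    by (rule decseq_convergent)
  have "L \<ge> 0" using \<open>\<forall>j. 0 \<le> y j\<close> by (intro LIMSEQ_le_const[OF L(1)]) simp
  have "L = 0"
  proof (rule ccontr)
    assume "L \<noteq> 0"
    with \<open>L \<ge> 0\<close> have "L > 0" by simp
    have "(\<lambda>j. y (Suc j)) \<longlonglongrightarrow> L" using L(1) by (rule LIMSEQ_Suc)
    moreover have "(\<lambda>j. f (y j)) \<longlonglongrightarrow> f L"
      using isCont_tendsto_compose[OF cont[OF \<open>L > 0\<close>] L(1)] .
    moreover have "\<exists>N. \<forall>j\<ge>N. y (Suc j) \<le> f (y j)" using dom by blast
    ultimately have "L \<le> f L" by (rule LIMSEQ_le)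
    moreover have "L < c" using L(2) start by (metis order.strict_trans1)
    ultimately show False using below[OF \<open>L > 0\<close>] by simp
  qed
  with dec L(1) show ?thesis by simp
qed

theorem mainTheorem7:
  fixes lam a ustar :: real and as bs x :: "nat \<Rightarrow> real" and k :: nat
  assumes lam: "lam > 1"
    and bdd: "bdd_above (as ` {1..})"
    and a_def: "a = (SUP n\<in>{1..}. as n)"
    and bs_nonneg: "\<And>n. n \<ge> 1 \<Longrightarrow> bs n \<ge> 0"
    and a_ge: "a \<ge> (lam - 1) * (1 - ln (lam - 1))"
    and ustar: "is_allee_fixed_point lam a ustar"
    and x_nonneg: "\<And>n. x n \<ge> 0"
    and x_rec: "\<And>n. n \<ge> 1 \<Longrightarrow>
                  x (n + 1) = x (n - 1) powr lam * exp (as n - bs n * x n - x (n - 1))"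
    and xk: "0 < x k" "x k < ustar"
  shows "(\<forall>j. x (k + 2 * (j + 1)) < x (k + 2 * j)) \<and> (\<lambda>j. x (k + 2 * j)) \<longlonglongrightarrow> 0"
proof -
  define y where "y j = x (k + 2 * j)" for j
  have y_rec: "y (Suc j) = y j powr lam * exp (as n - bs n * x n - y j)"
    if "n = k + 2 * j + 1" for j n
    using x_rec[of n] that by (simp add: y_def)
  have pos: "0 < y j" for j
  proof (induction j)
    case (Suc j)
    then show ?case using y_rec[OF refl] by simp
  qed (use xk in \<open>simp add: y_def\<close>)
  have dom: "y (Suc j) \<le> allee_map lam a (y j)" for j
  proof -
    define n where "n = k + 2 * j + 1"
    have "as n \<le> a" unfolding a_def using bdd by (intro cSUP_upper) (auto simp: n_def)
    moreover have "bs n * x n \<ge> 0" using bs_nonneg x_nonneg by (simp add: n_def)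
    ultimately show ?thesis
      unfolding y_rec[OF n_def] allee_map_def by (intro mult_left_mono) auto
  qed
  have "(\<forall>j. y (Suc j) < y j) \<and> y \<longlonglongrightarrow> 0"
  proof (rule dominated_orbit_decreases_to_zero)
    show "allee_map lam a u < u" if "0 < u" "u < ustar" for u
      using allee_map_less_self_below_fixed_point[OF lam ustar that] .
    show "y 0 < ustar" using xk(2) by (simp add: y_def)
  qed (use isCont_allee_map pos dom in auto)
  moreover have "y = (\<lambda>j. x (k + 2 * j))" by (simp add: y_def fun_eq_iff)
  ultimately show ?thesis by (simp add: y_def)
qed

end
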